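(* Let $k\ge2$, $n>2^k$ and $c=2^k-2$. Let $C=[u_1\oplus\ell_1]\cup\dots\cup[u_s\oplus\ell_s]\subseteq V$, where $0\le u_1<\dots<u_s\le n-1$ and $s$ is minimal. Then $C$ is a maximal covered set, i.e. $C=C(T)$ for some $T\in\mathcal{T}_k$ and there is no $T'\in\mathcal{T}_k$ with $C(T)\subsetneq C(T')$, if and only if (i) $u_1\neq 1$ and $u_s+\ell_s-1\neq n-2$; (ii) $u_{t+1}-(u_t+\ell_t)\ge 2$ for all $t\in\{1,\dots,s-1\}$, and $u_1-(u_s+\ell_s-n)\ge 2$; (iii) $\sum_{t=1}^s\ell_t=c+1-s$ if $\{0,n-1\}\cap C=\emptyset$, and $\sum_{t=1}^s\ell_t=c+2-s$ otherwise.
   Context: $G$ is the path graph with $V=\{0,\dots,n-1\}$ and edges $\{v,v+1\}$, $0\le v\le n-2$. A search strategy for a tree $H$ is a rooted binary tree defined recursively: a single node is a search strategy for any $H$; otherwise the root is labeled with an edge $uv$ of $H$ and its two child subtrees are search strategies for the components $H_u,H_v$ of $H-uv$ containing $u,v$. Nodes get vertex sets: the root gets $V(H)$, the children of a root labeled $uv$ get $V(H_u),V(H_v)$, recursively. $C(T)$ is the set of vertices $v$ with $V(\lambda)=\{v\}$ for a leaf $\lambda$ of $T$. The height of $T$ is the maximum number of edges on a root-to-leaf path; $\mathcal{T}_k$ is the set of search strategies for $G$ of height at most $k$. For integers $u,\ell$, $[u\oplus\ell]=\{w\bmod n: u\le w\le u+\ell-1\}$. *)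

theory Defs
  imports Main
begin

text \<open>Search strategies for a subpath of the path graph with vertices a..b.
  A node Node v L R is labeled with the edge {v, v+1}.\<close>
datatype sstrat = Leaf | Node int sstrat sstrat

fun is_strat :: "int \<Rightarrow> int \<Rightarrow> sstrat \<Rightarrow> bool" where
  "is_strat a b Leaf = True"
| "is_strat a b (Node v L R) =
     (a \<le> v \<and> v + 1 \<le> b \<and> is_strat a v L \<and> is_strat (v + 1) b R)"

fun leaf_sets :: "int \<Rightarrow> int \<Rightarrow> sstrat \<Rightarrow> int set set" where
  "leaf_sets a b Leaf = {{a..b}}"
| "leaf_sets a b (Node v L R) = leaf_sets a v L \<union> leaf_sets (v + 1) b R"

fun height :: "sstrat \<Rightarrow> nat" where
  "height Leaf = 0"
| "height (Node v L R) = Suc (max (height L) (height R))"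

definition covered :: "int \<Rightarrow> sstrat \<Rightarrow> int set" where
  "covered n T = {v. {v} \<in> leaf_sets 0 (n - 1) T}"

definition strats_k :: "nat \<Rightarrow> int \<Rightarrow> sstrat set" where
  "strats_k k n = {T. is_strat 0 (n - 1) T \<and> height T \<le> k}"

definition cyc :: "int \<Rightarrow> int \<Rightarrow> int \<Rightarrow> int set" where
  "cyc n u l = {w mod n | w. u \<le> w \<and> w \<le> u + l - 1}"

definition is_rep :: "int \<Rightarrow> int set \<Rightarrow> nat \<Rightarrow> (nat \<Rightarrow> int) \<Rightarrow> (nat \<Rightarrow> int) \<Rightarrow> bool" where
  "is_rep n C s u l \<longleftrightarrow>
     (\<forall>t\<in>{1..s}. 0 \<le> u t \<and> u t \<le> n - 1) \<and>
     (\<forall>t\<in>{1..<s}. u t < u (t + 1)) \<and>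
     C = (\<Union>t\<in>{1..s}. cyc n (u t) (l t))"

definition min_rep :: "int \<Rightarrow> int set \<Rightarrow> nat \<Rightarrow> (nat \<Rightarrow> int) \<Rightarrow> (nat \<Rightarrow> int) \<Rightarrow> bool" where
  "min_rep n C s u l \<longleftrightarrow> is_rep n C s u l \<and>
     (\<forall>s' u' l'. is_rep n C s' u' l' \<longrightarrow> s \<le> s')"

definition maximal_covered :: "nat \<Rightarrow> int \<Rightarrow> int set \<Rightarrow> bool" where
  "maximal_covered k n C \<longleftrightarrow>
     (\<exists>T\<in>strats_k k n. C = covered n T \<and>
        \<not> (\<exists>T'\<in>strats_k k n. covered n T \<subset> covered n T'))"

end

theory Submission
  imports Defs
begin

text \<open>The leaves of a search strategy are the segments between the edges it cuts, and a
  strategy of height at most \<open>k\<close> cuts fewer than \<open>2^k\<close> edges; conversely every set of fewer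
  than \<open>2^k\<close> edges is cut by such a strategy, splitting at a median edge. So the covered
  sets are the sets of vertices isolated by at most \<open>2^k - 1\<close> cuts. Such a set \<open>C\<close> has no
  trapped vertex (one outside \<open>C\<close> whose neighbours all lie in \<open>C\<close>), the cheapest way to
  isolate it is to cut exactly the edges incident to \<open>C\<close>, and since \<open>n > 2^k\<close> it is maximal
  iff there are \<open>2^k - 1\<close> of them.

  In a minimal representation by cyclic intervals consecutive intervals are separated by a
  gap, so the edges incident to \<open>C\<close> are the intervals extended by one vertex to the left,
  minus the edge \<open>{n - 1, 0}\<close> missing from the path: \<open>\<Sum> l\<^sub>t + s\<close> of them, less one if
  \<open>0\<close> or \<open>n - 1\<close> lies in \<open>C\<close>. A trapped vertex is a gap of length one, or the vertex \<open>0\<close>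
  or \<open>n - 1\<close> next to an interval starting at \<open>1\<close> or ending at \<open>n - 2\<close>.\<close>

section \<open>Covered sets and cut edges\<close>

definition leaf_points :: "int \<Rightarrow> int \<Rightarrow> sstrat \<Rightarrow> int set" where
  "leaf_points a b T = {v. {v} \<in> leaf_sets a b T}"

text \<open>The vertices of the path on \<open>{a..b}\<close> that are isolated once the edges in \<open>K\<close> are cut,
  where \<open>x \<in> K\<close> stands for the edge \<open>{x, x + 1}\<close>.\<close>
definition cut_points :: "int \<Rightarrow> int \<Rightarrow> int set \<Rightarrow> int set" where
  "cut_points a b K = {x. a \<le> x \<and> x \<le> b \<and> (x = a \<or> x - 1 \<in> K) \<and> (x = b \<or> x \<in> K)}"

lemma leaf_points_Leaf: "leaf_points a b Leaf = cut_points a b {}"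
proof -
  have "{v} = {a..b} \<longleftrightarrow> a = v \<and> b = v" for v :: int
    by (metis atLeastAtMost_singleton_iff)
  then show ?thesis unfolding leaf_points_def cut_points_def by auto
qed

lemma leaf_points_Node: "leaf_points a b (Node v L R) = leaf_points a v L \<union> leaf_points (v + 1) b R"
  unfolding leaf_points_def by auto

lemma cut_points_split:
  assumes "a \<le> v" "v < b" "KL \<subseteq> {a..<v}" "KR \<subseteq> {v + 1..<b}"
  shows "cut_points a b (KL \<union> {v} \<union> KR) = cut_points a v KL \<union> cut_points (v + 1) b KR"
proof -
  have "\<forall>x\<in>KL. x < v" "\<forall>x\<in>KR. v < x \<and> x < b" using assms by auto
  then show ?thesis using assms(1,2) unfolding cut_points_def by (auto; fastforce)
qed

lemma cut_points_mono: "K \<subseteq> K' \<Longrightarrow> cut_points a b K \<subseteq> cut_points a b K'"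
  unfolding cut_points_def by auto

lemma leaf_points_eq_cut_points:
  assumes "is_strat a b T"
  obtains K where "K \<subseteq> {a..<b}" "card K < 2 ^ height T" "leaf_points a b T = cut_points a b K"
  using assms
proof (induction T arbitrary: a b thesis)
  case Leaf
  show ?case by (rule Leaf.prems(1)[of "{}"]) (simp_all add: leaf_points_Leaf)
next
  case (Node v L R)
  have ab: "a \<le> v" "v < b" and strats: "is_strat a v L" "is_strat (v + 1) b R"
    using Node.prems(2) by auto
  obtain KL where L: "KL \<subseteq> {a..<v}" "card KL < 2 ^ height L"
    "leaf_points a v L = cut_points a v KL"
    using Node.IH(1)[OF _ strats(1)] by blast
  obtain KR where R: "KR \<subseteq> {v + 1..<b}" "card KR < 2 ^ height R"
    "leaf_points (v + 1) b R = cut_points (v + 1) b KR"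
    using Node.IH(2)[OF _ strats(2)] by blast
  have "card (KL \<union> {v} \<union> KR) \<le> card KL + 1 + card KR"
    using card_Un_le[of "KL \<union> {v}" KR] card_Un_le[of KL "{v}"] by simp
  also have "\<dots> < 2 ^ height L + 2 ^ height R"
    using L(2) R(2) by linarith
  also have "\<dots> \<le> 2 ^ max (height L) (height R) + 2 ^ max (height L) (height R)"
    by (intro add_le_mono) simp_all
  also have "\<dots> = 2 ^ height (Node v L R)"
    by simp
  finally have "card (KL \<union> {v} \<union> KR) < 2 ^ height (Node v L R)" .
  moreover have "leaf_points a b (Node v L R) = cut_points a b (KL \<union> {v} \<union> KR)"
    using cut_points_split[OF ab L(1) R(1)] by (simp add: leaf_points_Node L(3) R(3))
  moreover have "KL \<union> {v} \<union> KR \<subseteq> {a..<b}" using ab L(1) R(1) by auto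
  ultimately show ?case using Node.prems(1) by blast
qed

lemma ex_card_less_eq:
  fixes K :: "'a::linorder set"
  assumes "finite K" "j < card K"
  shows "\<exists>v\<in>K. card {x\<in>K. x < v} = j"
  using assms
proof (induction K arbitrary: j rule: finite_linorder_max_induct)
  case empty
  then show ?case by simp
next
  case (insert m A)
  show ?case
  proof (cases "j < card A")
    case True
    then obtain v where v: "v \<in> A" "card {x\<in>A. x < v} = j" using insert by blast
    have "{x\<in>insert m A. x < v} = {x\<in>A. x < v}" using v insert by auto
    then have "card {x\<in>insert m A. x < v} = j" using v(2) by simp
    moreover have "v \<in> insert m A" using v(1) by simp
    ultimately show ?thesis by (rule bexI)
  next
    case False
    then have "j = card A" using insert by auto
    moreover have "{x\<in>insert m A. x < m} = A" using insert by auto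
    ultimately show ?thesis by auto
  qed
qed

text \<open>Cutting at the edge of rank \<open>min (|K| - 1) (2^h - 1)\<close> leaves fewer than \<open>2^h\<close> cuts
  on either side.\<close>
lemma strat_of_cut_points:
  assumes "K \<subseteq> {a..<b}" "card K < 2 ^ h"
  obtains T where "is_strat a b T" "height T \<le> h" "leaf_points a b T = cut_points a b K"
  using assms
proof (induction h arbitrary: a b K thesis)
  case 0
  then have "K = {}" using finite_subset[OF 0(2)] by auto
  then show ?case using 0(1)[of Leaf] by (simp add: leaf_points_Leaf)
next
  case (Suc h)
  show ?case
  proof (cases "K = {}")
    case True
    then show ?thesis using Suc.prems(1)[of Leaf] by (simp add: leaf_points_Leaf)
  next
    case False
    have fin: "finite K" using Suc.prems(2) finite_subset by blast
    define j where "j = min (card K - 1) (2 ^ h - 1)"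
    have "card K > 0" using False fin by auto
    then have "j < card K" unfolding j_def by (simp add: min_less_iff_disj)
    then obtain v where v: "v \<in> K" "card {x\<in>K. x < v} = j" using ex_card_less_eq fin by blast
    define KL where "KL = {x\<in>K. x < v}"
    define KR where "KR = {x\<in>K. v < x}"
    have K: "K = KL \<union> {v} \<union> KR" unfolding KL_def KR_def using v by auto
    have "card K = card (KL \<union> {v}) + card KR"
      unfolding K using fin by (intro card_Un_disjoint) (auto simp: KL_def KR_def)
    also have "card (KL \<union> {v}) = card KL + 1"
      using fin by (subst card_Un_disjoint) (auto simp: KL_def)
    finally have "card K = j + 1 + card KR" using v(2) unfolding KL_def by simp
    then have cL: "card KL < 2 ^ h" and cR: "card KR < 2 ^ h"
      using v(2) Suc.prems(3) unfolding KL_def j_def by auto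
    have ab: "a \<le> v" "v < b" using v Suc.prems(2) by auto
    have sL: "KL \<subseteq> {a..<v}" and sR: "KR \<subseteq> {v + 1..<b}"
      using Suc.prems(2) unfolding KL_def KR_def by auto
    obtain TL where TL: "is_strat a v TL" "height TL \<le> h"
      "leaf_points a v TL = cut_points a v KL"
      by (rule Suc.IH[OF _ sL cL])
    obtain TR where TR: "is_strat (v + 1) b TR" "height TR \<le> h"
      "leaf_points (v + 1) b TR = cut_points (v + 1) b KR"
      by (rule Suc.IH[OF _ sR cR])
    have "leaf_points a b (Node v TL TR) = cut_points a b K"
      using cut_points_split[OF ab sL sR] by (simp add: leaf_points_Node TL(3) TR(3) K)
    then show ?thesis using Suc.prems(1)[of "Node v TL TR"] TL TR ab by simp
  qed
qed

lemma ex_covered_iff_cut_points: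
  "(\<exists>T\<in>strats_k k n. covered n T = D) \<longleftrightarrow>
    (\<exists>K. K \<subseteq> {0..<n - 1} \<and> card K < 2 ^ k \<and> D = cut_points 0 (n - 1) K)"
proof
  assume "\<exists>T\<in>strats_k k n. covered n T = D"
  then obtain T where T: "is_strat 0 (n - 1) T" "height T \<le> k" "covered n T = D"
    unfolding strats_k_def by auto
  obtain K where K: "K \<subseteq> {0..<n - 1}" "card K < 2 ^ height T"
    "leaf_points 0 (n - 1) T = cut_points 0 (n - 1) K"
    using leaf_points_eq_cut_points[OF T(1)] by blast
  have "(2::nat) ^ height T \<le> 2 ^ k" using T(2) by simp
  then have "card K < 2 ^ k" using K(2) by linarith
  then show "\<exists>K. K \<subseteq> {0..<n - 1} \<and> card K < 2 ^ k \<and> D = cut_points 0 (n - 1) K"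
    using K T(3) unfolding covered_def leaf_points_def by auto
next
  assume "\<exists>K. K \<subseteq> {0..<n - 1} \<and> card K < 2 ^ k \<and> D = cut_points 0 (n - 1) K"
  then obtain K where K: "K \<subseteq> {0..<n - 1}" "card K < 2 ^ k" "D = cut_points 0 (n - 1) K"
    by blast
  obtain T where "is_strat 0 (n - 1) T" "height T \<le> k"
    "leaf_points 0 (n - 1) T = cut_points 0 (n - 1) K"
    using strat_of_cut_points[OF K(1,2)] by blast
  then show "\<exists>T\<in>strats_k k n. covered n T = D"
    using K(3) unfolding strats_k_def covered_def leaf_points_def by auto
qed

section \<open>Maximal covered sets\<close>

text \<open>A trapped vertex is isolated as soon as its neighbours are, so no covered set omits it.\<close>
definition no_trapped_vertex :: "int \<Rightarrow> int set \<Rightarrow> bool" where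
  "no_trapped_vertex b C \<longleftrightarrow>
     (\<forall>x\<in>{0..b} - C. \<not> ((x = 0 \<or> x - 1 \<in> C) \<and> (x = b \<or> x + 1 \<in> C)))"

definition incident_edges :: "int \<Rightarrow> int set \<Rightarrow> int set" where
  "incident_edges b C = {x. 0 \<le> x \<and> x \<le> b - 1 \<and> (x \<in> C \<or> x + 1 \<in> C)}"

lemma finite_incident_edges: "finite (incident_edges b C)"
  by (rule finite_subset[of _ "{0..b}"]) (auto simp: incident_edges_def)

lemma incident_edges_cut_points: "K \<subseteq> {0..<b} \<Longrightarrow> incident_edges b (cut_points 0 b K) \<subseteq> K"
  unfolding incident_edges_def cut_points_def by auto

lemma no_trapped_vertex_cut_points: "no_trapped_vertex b (cut_points 0 b K)"
  unfolding no_trapped_vertex_def cut_points_def by auto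

lemma cut_points_incident_edges:
  "C \<subseteq> {0..b} \<Longrightarrow> no_trapped_vertex b C \<Longrightarrow> cut_points 0 b (incident_edges b C) = C"
  unfolding no_trapped_vertex_def cut_points_def incident_edges_def by (auto; force)

lemma card_incident_edges_strict_mono:
  assumes "C \<subset> D" "D \<subseteq> {0..b}" "no_trapped_vertex b C"
  shows "card (incident_edges b C) < card (incident_edges b D)"
proof -
  obtain x where x: "x \<in> D" "x \<notin> C" using assms(1) by auto
  have "\<exists>y. y \<in> incident_edges b D \<and> y \<notin> incident_edges b C"
  proof (cases "x \<le> b - 1 \<and> x + 1 \<notin> C")
    case True
    then show ?thesis using x assms(2) unfolding incident_edges_def by (intro exI[of _ x]) auto
  next
    case False
    have x0b: "x \<in> {0..b} - C" using x assms(2) by auto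
    with False have "x = b \<or> x + 1 \<in> C" by auto
    then have "x \<noteq> 0" "x - 1 \<notin> C"
      using assms(3) x0b unfolding no_trapped_vertex_def by auto
    then show ?thesis using x assms(2) unfolding incident_edges_def by (intro exI[of _ "x - 1"]) auto
  qed
  moreover have "incident_edges b C \<subseteq> incident_edges b D"
    using assms(1) unfolding incident_edges_def by auto
  ultimately show ?thesis by (metis finite_incident_edges psubsetI psubset_card_mono)
qed

lemma ex_cut_points_iff:
  assumes "C \<subseteq> {0..b}"
  shows "(\<exists>K. K \<subseteq> {0..<b} \<and> card K < m \<and> C = cut_points 0 b K) \<longleftrightarrow>
    no_trapped_vertex b C \<and> card (incident_edges b C) < m"
proof
  assume "\<exists>K. K \<subseteq> {0..<b} \<and> card K < m \<and> C = cut_points 0 b K"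
  then obtain K where K: "K \<subseteq> {0..<b}" "card K < m" "C = cut_points 0 b K" by blast
  have "card (incident_edges b C) \<le> card K"
    using K(1,3) incident_edges_cut_points by (metis card_mono finite_atLeastLessThan_int finite_subset)
  then show "no_trapped_vertex b C \<and> card (incident_edges b C) < m"
    using K no_trapped_vertex_cut_points by auto
next
  assume "no_trapped_vertex b C \<and> card (incident_edges b C) < m"
  moreover have "incident_edges b C \<subseteq> {0..<b}" unfolding incident_edges_def by auto
  ultimately show "\<exists>K. K \<subseteq> {0..<b} \<and> card K < m \<and> C = cut_points 0 b K"
    using cut_points_incident_edges[OF assms] by metis
qed

text \<open>Cutting the least uncut edge isolates one more vertex.\<close>
lemma ex_cut_points_psuperset:
  assumes "C \<subseteq> {0..b}" "no_trapped_vertex b C" "int (card (incident_edges b C)) < b"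
  obtains K where "K \<subseteq> {0..<b}" "card K = card (incident_edges b C) + 1" "C \<subset> cut_points 0 b K"
proof -
  let ?E = "incident_edges b C"
  have sub: "?E \<subseteq> {0..<b}" unfolding incident_edges_def by auto
  have "\<not> {0..<b} \<subseteq> ?E"
  proof
    assume "{0..<b} \<subseteq> ?E"
    then have "card {0..<b} \<le> card ?E" using finite_incident_edges card_mono by blast
    then show False using assms(3) by simp
  qed
  then have ne: "{0..<b} - ?E \<noteq> {}" by auto
  define x where "x = Min ({0..<b} - ?E)"
  have x: "x \<in> {0..<b} - ?E" unfolding x_def using Min_in[OF _ ne] by simp
  have prev: "x = 0 \<or> x - 1 \<in> ?E"
  proof (rule ccontr)
    assume "\<not> (x = 0 \<or> x - 1 \<in> ?E)"
    then have "x - 1 \<in> {0..<b} - ?E" using x by auto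
    then have "x \<le> x - 1" unfolding x_def using Min_le by (metis finite_Diff finite_atLeastLessThan_int)
    then show False by simp
  qed
  have "card (insert x ?E) = card ?E + 1" using x finite_incident_edges by simp
  moreover have "insert x ?E \<subseteq> {0..<b}" using x sub by auto
  moreover have "C \<subseteq> cut_points 0 b (insert x ?E)"
    using cut_points_incident_edges[OF assms(1,2)] cut_points_mono[of ?E "insert x ?E"] by auto
  moreover have "x \<in> cut_points 0 b (insert x ?E)" "x \<notin> C"
    using x prev unfolding cut_points_def incident_edges_def by auto
  ultimately show ?thesis using that by blast
qed

lemma maximal_covered_iff_card_incident_edges:
  assumes "2 ^ k < n" "C \<subseteq> {0..n - 1}"
  shows "maximal_covered k n C \<longleftrightarrow>
    no_trapped_vertex (n - 1) C \<and> card (incident_edges (n - 1) C) = 2 ^ k - 1"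
proof -
  have covered_iff: "(\<exists>T\<in>strats_k k n. covered n T = D) \<longleftrightarrow>
      no_trapped_vertex (n - 1) D \<and> card (incident_edges (n - 1) D) < 2 ^ k"
    if "D \<subseteq> {0..n - 1}" for D
    unfolding ex_covered_iff_cut_points using ex_cut_points_iff[OF that] by metis
  have covered_subset: "D \<subseteq> {0..n - 1}" if "\<exists>T\<in>strats_k k n. covered n T = D" for D
    using that unfolding ex_covered_iff_cut_points cut_points_def by auto
  have maximal: "maximal_covered k n C \<longleftrightarrow> (\<exists>T\<in>strats_k k n. covered n T = C) \<and>
      \<not> (\<exists>D. (\<exists>T\<in>strats_k k n. covered n T = D) \<and> C \<subset> D)"
    unfolding maximal_covered_def by auto
  show ?thesis
  proof
    assume max: "maximal_covered k n C"
    then have ntv: "no_trapped_vertex (n - 1) C" and lt: "card (incident_edges (n - 1) C) < 2 ^ k"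
      using covered_iff[OF assms(2)] maximal by auto
    show "no_trapped_vertex (n - 1) C \<and> card (incident_edges (n - 1) C) = 2 ^ k - 1"
    proof (rule ccontr)
      assume "\<not> ?thesis"
      then have lt1: "card (incident_edges (n - 1) C) + 1 < 2 ^ k" using ntv lt by auto
      then have "int (card (incident_edges (n - 1) C) + 1) < 2 ^ k"
        by (metis of_nat_less_iff of_nat_numeral of_nat_power)
      then have "int (card (incident_edges (n - 1) C)) < n - 1" using assms(1) by linarith
      then obtain K where K: "K \<subseteq> {0..<n - 1}" "card K = card (incident_edges (n - 1) C) + 1"
        "C \<subset> cut_points 0 (n - 1) K"
        using ex_cut_points_psuperset[OF assms(2) ntv] by blast
      then have "\<exists>T\<in>strats_k k n. covered n T = cut_points 0 (n - 1) K"
        unfolding ex_covered_iff_cut_points using lt1 by auto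
      then show False using K(3) max maximal by blast
    qed
  next
    assume r: "no_trapped_vertex (n - 1) C \<and> card (incident_edges (n - 1) C) = 2 ^ k - 1"
    have "\<not> (\<exists>D. (\<exists>T\<in>strats_k k n. covered n T = D) \<and> C \<subset> D)"
    proof
      assume "\<exists>D. (\<exists>T\<in>strats_k k n. covered n T = D) \<and> C \<subset> D"
      then obtain D where D: "\<exists>T\<in>strats_k k n. covered n T = D" "C \<subset> D" by blast
      then have "card (incident_edges (n - 1) C) < card (incident_edges (n - 1) D)"
        using card_incident_edges_strict_mono covered_subset r by blast
      moreover have "card (incident_edges (n - 1) D) < 2 ^ k"
        using covered_iff[OF covered_subset[OF D(1)]] D(1) by blast
      ultimately show False using r by linarith
    qed
    moreover have "(0::nat) < 2 ^ k" by simp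
    ultimately show "maximal_covered k n C"
      using covered_iff[OF assms(2)] maximal r by (metis diff_less zero_less_one)
  qed
qed

section \<open>Minimal representations by cyclic intervals\<close>

lemma cyc_eq_image: "cyc n a m = (\<lambda>w. w mod n) ` {a..a + m - 1}"
  unfolding cyc_def by auto

lemma cyc_subset: "n > 0 \<Longrightarrow> cyc n a m \<subseteq> {0..n - 1}"
  unfolding cyc_def by auto

lemma atLeastAtMost_subset_cyc:
  assumes "n \<le> m" "n > 0"
  shows "{0..n - 1} \<subseteq> cyc n a m"
proof
  fix x assume x: "x \<in> {0..n - 1}"
  define w where "w = a + (x - a) mod n"
  have "a \<le> w" "w \<le> a + m - 1" using assms unfolding w_def
    by (simp_all add: pos_mod_sign) (smt (verit) pos_mod_bound)
  moreover have "w mod n = x"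
    using x unfolding w_def by (simp add: mod_add_right_eq)
  ultimately show "x \<in> cyc n a m" unfolding cyc_def by auto
qed

lemma cyc_Un:
  assumes "a \<le> c" "c \<le> a + la"
  shows "cyc n a (max (a + la) (c + lb) - a) = cyc n a la \<union> cyc n c lb"
proof -
  have "{a..a + (max (a + la) (c + lb) - a) - 1} = {a..a + la - 1} \<union> {c..c + lb - 1}"
    using assms by auto
  then show ?thesis unfolding cyc_eq_image by (simp add: image_Un)
qed

lemma cyc_add_period: "cyc n (a + n) m = cyc n a m"
proof -
  have "{a + n..a + n + m - 1} = (\<lambda>w. w + n) ` {a..a + m - 1}"
    by (simp add: algebra_simps)
  then have "cyc n (a + n) m = (\<lambda>w. (w + n) mod n) ` {a..a + m - 1}"
    unfolding cyc_eq_image by (simp only: image_image)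
  then show ?thesis unfolding cyc_eq_image by simp
qed

lemma cyc_extend_left:
  assumes "m \<ge> 1"
  shows "cyc n (a - 1) (m + 1) = cyc n a m \<union> (\<lambda>x. (x - 1) mod n) ` cyc n a m"
proof -
  have "(\<lambda>x. (x - 1) mod n) ` cyc n a m = (\<lambda>w. (w - 1) mod n) ` {a..a + m - 1}"
    unfolding cyc_eq_image image_image by (simp add: mod_diff_left_eq)
  also have "\<dots> = (\<lambda>w. w mod n) ` {a - 1..a + m - 2}"
  proof -
    have "{a - 1..a + m - 2} = (\<lambda>w. w - 1) ` {a..a + m - 1}" by simp
    then show ?thesis by (simp only: image_image)
  qed
  finally have "(\<lambda>x. (x - 1) mod n) ` cyc n a m = (\<lambda>w. w mod n) ` {a - 1..a + m - 2}" .
  moreover have "{a - 1..a - 1 + (m + 1) - 1} = {a..a + m - 1} \<union> {a - 1..a + m - 2}"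
    using assms by auto
  ultimately show ?thesis unfolding cyc_eq_image by (simp add: image_Un)
qed

lemma inj_on_mod_atLeastLessThan: "(n::int) > 0 \<Longrightarrow> inj_on (\<lambda>w. w mod n) {a..<a + n}"
proof (rule inj_onI)
  fix x y assume n: "n > 0" and x: "x \<in> {a..<a + n}" and y: "y \<in> {a..<a + n}"
    and eq: "x mod n = y mod n"
  have "(x - a) mod n = (y - a) mod n" using eq by (metis mod_diff_left_eq)
  then show "x = y" using x y by (simp add: mod_pos_pos_trivial)
qed

lemma less_of_consecutive_less:
  fixes u :: "nat \<Rightarrow> int"
  assumes "\<forall>t\<in>{1..<s}. u t < u (t + 1)" "1 \<le> i" "i < j" "j \<le> s"
  shows "u i < u j"
  using assms(3,4)
proof (induction j)
  case 0
  then show ?case by simp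
next
  case (Suc j)
  then show ?case
    using assms(1,2) by (cases "i = j") (auto intro: less_trans[of _ "u j"])
qed

lemma is_rep_remove:
  assumes rep: "is_rep n C s u l" and j: "j \<in> {1..s}"
    and C_eq: "C = (\<Union>t\<in>{1..s} - {j}. cyc n (u t) (l' t))"
  shows "is_rep n C (s - 1)
    (\<lambda>t. u (if t < j then t else t + 1)) (\<lambda>t. l' (if t < j then t else t + 1))"
proof -
  define skip where "skip t = (if t < j then t else t + 1)" for t
  have img: "skip ` {1..s - 1} = {1..s} - {j}"
  proof
    show "skip ` {1..s - 1} \<subseteq> {1..s} - {j}" using j unfolding skip_def by auto
  next
    show "{1..s} - {j} \<subseteq> skip ` {1..s - 1}"
    proof
      fix t assume t: "t \<in> {1..s} - {j}"
      show "t \<in> skip ` {1..s - 1}"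
      proof (cases "t < j")
        case True
        then have "skip t = t" "t \<in> {1..s - 1}" using t j unfolding skip_def by auto
        then show ?thesis by force
      next
        case False
        then have "skip (t - 1) = t" "t - 1 \<in> {1..s - 1}" using t j unfolding skip_def by auto
        then show ?thesis by force
      qed
    qed
  qed
  have incr: "\<forall>t\<in>{1..<s}. u t < u (t + 1)" and range: "\<forall>t\<in>{1..s}. 0 \<le> u t \<and> u t \<le> n - 1"
    using rep unfolding is_rep_def by auto
  have "C = (\<Union>t\<in>{1..s - 1}. cyc n (u (skip t)) (l' (skip t)))"
    unfolding C_eq img[symmetric] by simp
  moreover have "\<forall>t\<in>{1..s - 1}. 0 \<le> u (skip t) \<and> u (skip t) \<le> n - 1"
    using range img by blast
  moreover have "\<forall>t\<in>{1..<s - 1}. u (skip t) < u (skip (t + 1))"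
  proof
    fix t assume t: "t \<in> {1..<s - 1}"
    have "1 \<le> skip t" "skip t < skip (t + 1)" "skip (t + 1) \<le> s" using t j unfolding skip_def by auto
    then show "u (skip t) < u (skip (t + 1))" using less_of_consecutive_less[OF incr] by blast
  qed
  ultimately show ?thesis unfolding is_rep_def skip_def by simp
qed

text \<open>The whole vertex set is excluded: it is the one set that a minimal representation may
  cover by a single interval of length at least \<open>n\<close>.\<close>
locale min_cyclic_rep =
  fixes n :: int and C :: "int set" and s :: nat and u l :: "nat \<Rightarrow> int"
  assumes n_ge_2: "n \<ge> 2" and C_subset: "C \<subseteq> {0..n - 1}" and s_ge_1: "s \<ge> 1"
    and min_rep: "min_rep n C s u l" and C_ne_all: "C \<noteq> {0..n - 1}"
begin

lemma rep: "is_rep n C s u l"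
  using min_rep unfolding min_rep_def by simp

lemma starts_increasing: "t \<in> {1..<s} \<Longrightarrow> u t < u (t + 1)"
  using rep unfolding is_rep_def by simp

lemma start_range: "t \<in> {1..s} \<Longrightarrow> 0 \<le> u t \<and> u t \<le> n - 1"
  using rep unfolding is_rep_def by simp

lemma C_eq: "C = (\<Union>t\<in>{1..s}. cyc n (u t) (l t))"
  using rep unfolding is_rep_def by simp

lemma start_less: "1 \<le> i \<Longrightarrow> i < j \<Longrightarrow> j \<le> s \<Longrightarrow> u i < u j"
  using less_of_consecutive_less starts_increasing by blast

lemma start_1_le: "t \<in> {1..s} \<Longrightarrow> u 1 \<le> u t"
  using start_less[of 1 t] by (cases "t = 1") auto

lemma no_removable_interval:
  assumes "j \<in> {1..s}" "C = (\<Union>t\<in>{1..s} - {j}. cyc n (u t) (l' t))"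
  shows False
  using min_rep is_rep_remove[OF rep assms] s_ge_1 unfolding min_rep_def by fastforce

lemma no_absorbing_interval:
  assumes "i \<in> {1..s}" "j \<in> {1..s}" "i \<noteq> j"
    and "cyc n (u i) L = cyc n (u i) (l i) \<union> cyc n (u j) (l j)"
  shows False
proof (rule no_removable_interval[OF assms(2), of "l(i := L)"])
  have I: "{1..s} - {j} = insert i ({1..s} - {i, j})" using assms(1,3) by auto
  have same: "(\<Union>t\<in>{1..s} - {i, j}. cyc n (u t) ((l(i := L)) t)) =
      (\<Union>t\<in>{1..s} - {i, j}. cyc n (u t) (l t))"
    by (rule SUP_cong) auto
  have "C = (\<Union>t\<in>{1..s} - {i, j}. cyc n (u t) (l t)) \<union> (cyc n (u i) (l i) \<union> cyc n (u j) (l j))"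
    using C_eq assms(1,2) by blast
  also have "\<dots> = (\<Union>t\<in>{1..s} - {j}. cyc n (u t) ((l(i := L)) t))"
    unfolding I using assms(4) same by auto
  finally show "C = (\<Union>t\<in>{1..s} - {j}. cyc n (u t) ((l(i := L)) t))" .
qed

lemma length_pos: "t \<in> {1..s} \<Longrightarrow> l t \<ge> 1"
proof (rule ccontr)
  assume t: "t \<in> {1..s}" and "\<not> l t \<ge> 1"
  then have "cyc n (u t) (l t) = {}" unfolding cyc_def by auto
  then have "C = (\<Union>t'\<in>{1..s} - {t}. cyc n (u t') (l t'))" using C_eq by auto
  then show False using no_removable_interval[OF t] by blast
qed

definition stop :: "nat \<Rightarrow> int" where
  "stop t = u t + l t"

text \<open>The first interval, shifted by one period, follows the last one.\<close>
definition next_start :: "nat \<Rightarrow> int" where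
  "next_start t = (if t < s then u (t + 1) else u 1 + n)"

lemma stop_lt_next_start: "t \<in> {1..s} \<Longrightarrow> stop t < next_start t"
proof (rule ccontr)
  assume t: "t \<in> {1..s}" and "\<not> stop t < next_start t"
  then have overlap: "next_start t \<le> u t + l t" unfolding stop_def by simp
  show False
  proof (cases "t < s")
    case True
    have "u t \<le> u (t + 1)" using starts_increasing[of t] True t by simp
    then show False using overlap True t no_absorbing_interval[of t "t + 1"]
      cyc_Un[of "u t" "u (t + 1)" "l t" n "l (t + 1)"] unfolding next_start_def by auto
  next
    case False
    then have ts: "t = s" using t by simp
    show False
    proof (cases "s = 1")
      case True
      then have "n \<le> l 1" using overlap ts unfolding next_start_def by simp
      then have "{0..n - 1} \<subseteq> C"
        using atLeastAtMost_subset_cyc[of n "l 1" "u 1"] n_ge_2 C_eq True by auto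
      then show False using C_subset C_ne_all by auto
    next
      case False
      have "u s \<le> u 1 + n" using start_range[of s] start_range[of 1] s_ge_1 by auto
      then have "cyc n (u s) (max (u s + l s) (u 1 + n + l 1) - u s) =
          cyc n (u s) (l s) \<union> cyc n (u 1) (l 1)"
        using cyc_Un[of "u s" "u 1 + n"] overlap ts cyc_add_period
        unfolding next_start_def by auto
      then show False using no_absorbing_interval[of s 1] False s_ge_1 by auto
    qed
  qed
qed

lemma stop_lt_start: "1 \<le> i \<Longrightarrow> i < j \<Longrightarrow> j \<le> s \<Longrightarrow> stop i < u j"
  using stop_lt_next_start[of i] start_less[of "i + 1" j]
  unfolding next_start_def by (cases "i + 1 = j") auto

lemma next_start_le: "t \<in> {1..s} \<Longrightarrow> next_start t \<le> u 1 + n"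
  using start_range[of "t + 1"] start_range[of 1] s_ge_1 unfolding next_start_def by auto

lemma stop_lt_wrap: "t \<in> {1..s} \<Longrightarrow> stop t < u 1 + n"
  using stop_lt_next_start next_start_le by fastforce

text \<open>Membership in \<open>C\<close> of \<open>w mod n\<close>, read off the intervals laid out without wrap-around
  on the window \<open>{u 1..<u 1 + n}\<close>.\<close>
definition unrolled :: "int \<Rightarrow> bool" where
  "unrolled w \<longleftrightarrow> (\<exists>t\<in>{1..s}. u t \<le> w \<and> w < stop t)"

lemma mod_mem_if_unrolled: "unrolled w \<Longrightarrow> w mod n \<in> C"
  unfolding unrolled_def stop_def using C_eq unfolding cyc_def by auto

lemma unrolled_if_mod_mem:
  assumes w: "u 1 \<le> w" "w < u 1 + n" and mem: "w mod n \<in> C"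
  shows "unrolled w"
proof -
  obtain t where t: "t \<in> {1..s}" "w mod n \<in> cyc n (u t) (l t)" using mem C_eq by auto
  then obtain w' where w': "u t \<le> w'" "w' \<le> u t + l t - 1" "w' mod n = w mod n"
    unfolding cyc_def by auto
  have "w' \<in> {u 1..<u 1 + n}"
    using w' start_1_le[OF t(1)] stop_lt_wrap[OF t(1)] unfolding stop_def by auto
  then have "w' = w"
    using inj_on_mod_atLeastLessThan[of n "u 1"] n_ge_2 w w'(3) unfolding inj_on_def by auto
  then show ?thesis unfolding unrolled_def stop_def using t w' by auto
qed

lemma unrolled_iff_mod_mem: "u 1 \<le> w \<Longrightarrow> w < u 1 + n \<Longrightarrow> unrolled w \<longleftrightarrow> w mod n \<in> C"
  using mod_mem_if_unrolled unrolled_if_mod_mem by blast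

lemma not_unrolled_in_gap:
  assumes t: "t \<in> {1..s}" and w: "stop t \<le> w" "w < next_start t"
  shows "\<not> unrolled w"
proof
  assume "unrolled w"
  then obtain t' where t': "t' \<in> {1..s}" "u t' \<le> w" "w < stop t'" unfolding unrolled_def by auto
  show False
  proof (cases "t' \<le> t")
    case True
    have "stop t' \<le> stop t"
    proof (cases "t' = t")
      case False
      then have "stop t' < u t" using stop_lt_start[of t' t] True t t' by auto
      also have "u t < stop t" using length_pos[OF t] unfolding stop_def by simp
      finally show ?thesis by simp
    qed simp
    then show False using w t' by simp
  next
    case False
    then have "t < s" "u (t + 1) \<le> u t'"
      using t t' start_less[of "t + 1" t'] by (auto, cases "t + 1 = t'", auto)
    then show False using w t' unfolding next_start_def by auto
  qed
qed

lemma unrolled_cases: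
  assumes "u 1 \<le> w" "w < u 1 + n"
  obtains "unrolled w" | t where "t \<in> {1..s}" "stop t \<le> w" "w < next_start t"
proof (cases "unrolled w")
  case False
  let ?T = "{t\<in>{1..s}. u t \<le> w}"
  define t where "t = Max ?T"
  have fin: "finite ?T" by simp
  have "1 \<in> ?T" using s_ge_1 assms by auto
  then have "t \<in> ?T" unfolding t_def using Max_in[OF fin] by blast
  then have t: "t \<in> {1..s}" "u t \<le> w" by auto
  have t_max: "t' \<le> t" if "t' \<in> {1..s}" "u t' \<le> w" for t'
    unfolding t_def using Max_ge[OF fin] that by blast
  have "stop t \<le> w" using False t unfolding unrolled_def by force
  moreover have "w < next_start t"
  proof (cases "t < s")
    case True
    then have "\<not> u (t + 1) \<le> w" using t_max[of "t + 1"] by auto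
    then show ?thesis using True unfolding next_start_def by simp
  qed (use assms in \<open>simp add: next_start_def\<close>)
  ultimately show ?thesis using that(2) t by blast
qed (use that in blast)

lemma card_extended_intervals:
  "int (card (\<Union>t\<in>{1..s}. cyc n (u t - 1) (l t + 1))) = (\<Sum>t=1..s. l t + 1)"
proof -
  define A where "A t = {u t - 1..u t + l t - 1}" for t
  have A_window: "(\<Union>t\<in>{1..s}. A t) \<subseteq> {u 1 - 1..<u 1 - 1 + n}"
    using start_1_le stop_lt_wrap unfolding A_def stop_def by fastforce
  have A_disjoint: "A i \<inter> A j = {}" if "i \<in> {1..s}" "j \<in> {1..s}" "i < j" for i j
    using stop_lt_start[of i j] that unfolding A_def stop_def by auto
  have "card (\<Union>t\<in>{1..s}. cyc n (u t - 1) (l t + 1)) =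
      card ((\<lambda>w. w mod n) ` (\<Union>t\<in>{1..s}. A t))"
    unfolding A_def cyc_eq_image by (simp add: image_UN)
  also have "\<dots> = card (\<Union>t\<in>{1..s}. A t)"
    using card_image inj_on_subset[OF inj_on_mod_atLeastLessThan A_window] n_ge_2 by simp
  also have "\<dots> = (\<Sum>t\<in>{1..s}. card (A t))"
    using A_disjoint by (intro card_UN_disjoint) (auto simp: A_def, metis Int_commute linorder_neqE_nat)
  finally have "int (card (\<Union>t\<in>{1..s}. cyc n (u t - 1) (l t + 1))) =
      (\<Sum>t\<in>{1..s}. int (card (A t)))"
    by simp
  also have "\<dots> = (\<Sum>t\<in>{1..s}. l t + 1)"
  proof (rule sum.cong)
    fix t assume "t \<in> {1..s}"
    then show "int (card (A t)) = l t + 1" using length_pos[of t] unfolding A_def by simp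
  qed simp
  finally show ?thesis .
qed

definition pred_set :: "int set" where
  "pred_set = (\<lambda>x. (x - 1) mod n) ` C"

lemma C_Un_pred_set: "C \<union> pred_set = (\<Union>t\<in>{1..s}. cyc n (u t - 1) (l t + 1))"
proof -
  have "(\<Union>t\<in>{1..s}. cyc n (u t - 1) (l t + 1)) =
      (\<Union>t\<in>{1..s}. cyc n (u t) (l t) \<union> (\<lambda>x. (x - 1) mod n) ` cyc n (u t) (l t))"
    using cyc_extend_left length_pos by (intro SUP_cong) auto
  also have "\<dots> = C \<union> (\<lambda>x. (x - 1) mod n) ` C"
    unfolding C_eq by (simp only: UN_Un_distrib image_UN)
  finally show ?thesis unfolding pred_set_def by simp
qed

lemma pred_mod: "y \<in> {0..n - 1} \<Longrightarrow> (y - 1) mod n = (if y = 0 then n - 1 else y - 1)"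
  using n_ge_2 by (auto simp: zmod_minus1 mod_pos_pos_trivial)

lemma pred_set_eq: "pred_set = {y - 1 | y. y \<in> C \<and> y \<noteq> 0} \<union> (if 0 \<in> C then {n - 1} else {})"
proof -
  have "pred_set = (\<lambda>y. if y = 0 then n - 1 else y - 1) ` C"
    unfolding pred_set_def using pred_mod C_subset n_ge_2 by (intro image_cong) (auto simp: zmod_minus1)
  then show ?thesis by auto
qed

text \<open>The edge \<open>{n - 1, 0}\<close> of the cycle is not an edge of the path.\<close>
lemma incident_edges_eq: "incident_edges (n - 1) C = (C \<union> pred_set) - {n - 1}"
  unfolding incident_edges_def pred_set_eq using C_subset by (auto; force)

lemma card_incident_edges:
  "int (card (incident_edges (n - 1) C)) =
    (\<Sum>t=1..s. l t) + int s - (if {0, n - 1} \<inter> C = {} then 0 else 1)"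
proof -
  have fin: "finite (C \<union> pred_set)" using C_subset finite_subset unfolding pred_set_def by auto
  have card_Un: "int (card (C \<union> pred_set)) = (\<Sum>t=1..s. l t) + int s"
    using card_extended_intervals C_Un_pred_set by (simp add: sum.distrib)
  have mem: "n - 1 \<in> C \<union> pred_set \<longleftrightarrow> {0, n - 1} \<inter> C \<noteq> {}"
    unfolding pred_set_eq using C_subset n_ge_2 by auto
  show ?thesis
  proof (cases "{0, n - 1} \<inter> C = {}")
    case False
    then have "card (C \<union> pred_set) = Suc (card (C \<union> pred_set - {n - 1}))"
      using card.remove[OF fin, of "n - 1"] mem by simp
    then show ?thesis unfolding incident_edges_eq using card_Un False by simp
  qed (use mem card_Un in \<open>simp add: incident_edges_eq\<close>)
qed

lemma unrolled_start: "t \<in> {1..s} \<Longrightarrow> unrolled (u t)"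
  using length_pos unfolding unrolled_def stop_def by force

lemma unrolled_before_stop: "t \<in> {1..s} \<Longrightarrow> unrolled (stop t - 1)"
  using length_pos unfolding unrolled_def stop_def by force

lemma unrolled_iff_mem: "u 1 \<le> w \<Longrightarrow> w < u 1 + n \<Longrightarrow> w \<in> {0..n - 1} \<Longrightarrow> unrolled w \<longleftrightarrow> w \<in> C"
  using unrolled_iff_mod_mem by (simp add: mod_pos_pos_trivial)

lemma zero_notin_one_in_iff: "0 \<notin> C \<and> 1 \<in> C \<longleftrightarrow> u 1 = 1"
proof
  assume C01: "0 \<notin> C \<and> 1 \<in> C"
  have t1: "1 \<in> {1..s}" and u1: "0 \<le> u 1" "u 1 \<le> n - 1" using start_range[of 1] s_ge_1 by auto
  show "u 1 = 1"
  proof (rule ccontr)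
    assume "u 1 \<noteq> 1"
    then consider "u 1 = 0" | "u 1 > 1" using u1 by linarith
    then show False
    proof cases
      case 1
      then show False using unrolled_start[OF t1] mod_mem_if_unrolled C01 by fastforce
    next
      case 2
      have "(n + 1) mod n = 1" using n_ge_2 by simp
      then have "unrolled (n + 1)" using unrolled_if_mod_mem[of "n + 1"] 2 u1 C01 by auto
      then obtain t where t: "t \<in> {1..s}" "u t \<le> n + 1" "n + 1 < stop t" unfolding unrolled_def by auto
      then have "unrolled n" unfolding unrolled_def using start_range[OF t(1)] by (intro bexI[of _ t]) auto
      then show False using mod_mem_if_unrolled[of n] C01 by simp
    qed
  qed
next
  assume u1: "u 1 = 1"
  have t1: "1 \<in> {1..s}" using s_ge_1 by simp
  have "1 \<in> C" using mod_mem_if_unrolled[OF unrolled_start[OF t1]] u1 n_ge_2 by simp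
  moreover have "\<not> unrolled n" using stop_lt_wrap u1 unfolding unrolled_def by fastforce
  then have "0 \<notin> C" using unrolled_iff_mod_mem[of n] u1 n_ge_2 by simp
  ultimately show "0 \<notin> C \<and> 1 \<in> C" by simp
qed

lemma last_notin_pred_in_iff: "n - 1 \<notin> C \<and> n - 2 \<in> C \<longleftrightarrow> stop s = n - 1"
proof
  assume C12: "n - 1 \<notin> C \<and> n - 2 \<in> C"
  have u1: "0 \<le> u 1" "u 1 \<le> n - 1" using start_range[of 1] s_ge_1 by auto
  have not_last: "\<not> unrolled (n - 1)"
    using unrolled_iff_mem[of "n - 1"] u1 C12 by auto
  show "stop s = n - 1"
  proof (cases "u 1 \<le> n - 2")
    case True
    then have "unrolled (n - 2)"
      using unrolled_iff_mem[of "n - 2"] u1 C12 n_ge_2 by auto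
    then obtain t where t: "t \<in> {1..s}" "u t \<le> n - 2" "n - 2 < stop t" unfolding unrolled_def by auto
    then have stop_t: "stop t = n - 1" using not_last unfolding unrolled_def by force
    have "t = s"
    proof (rule ccontr)
      assume "t \<noteq> s"
      then show False using stop_lt_start[of t s] t stop_t start_range[of s] s_ge_1 by auto
    qed
    then show ?thesis using stop_t by simp
  next
    case False
    have "(2 * n - 2) mod n = (n - 2 + 1 * n) mod n" by (simp add: algebra_simps)
    also have "\<dots> = n - 2" using n_ge_2 by (simp only: mod_mult_self1 mod_pos_pos_trivial)
    then have "unrolled (2 * n - 2)"
      using unrolled_iff_mod_mem[of "2 * n - 2"] False u1 C12 by simp
    then obtain t where t: "t \<in> {1..s}" "u t \<le> 2 * n - 2" "2 * n - 2 < stop t"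
      unfolding unrolled_def by auto
    then have "unrolled (n - 1)" unfolding unrolled_def using start_range[OF t(1)] by fastforce
    then show ?thesis using not_last by simp
  qed
next
  assume stop_s: "stop s = n - 1"
  have ts: "s \<in> {1..s}" using s_ge_1 by simp
  have u1: "0 \<le> u 1" "u 1 \<le> n - 1" using start_range[of 1] s_ge_1 by auto
  have "u 1 \<le> n - 2" using start_1_le[OF ts] length_pos[OF ts] stop_s unfolding stop_def by simp
  then have "n - 2 \<in> C"
    using unrolled_iff_mem[of "n - 2"] unrolled_before_stop[OF ts] stop_s n_ge_2 u1 by auto
  moreover have "\<not> unrolled (n - 1)"
  proof
    assume "unrolled (n - 1)"
    then obtain t where t: "t \<in> {1..s}" "u t \<le> n - 1" "n - 1 < stop t" unfolding unrolled_def by auto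
    then show False
      using stop_lt_start[of t s] stop_s start_range[of s] s_ge_1 by (cases "t = s") auto
  qed
  then have "n - 1 \<notin> C"
    using unrolled_iff_mem[of "n - 1"] u1 by auto
  ultimately show "n - 1 \<notin> C \<and> n - 2 \<in> C" by simp
qed

lemma trapped_if_gap_1:
  assumes "w mod n \<notin> C" "(w - 1) mod n \<in> C" "(w + 1) mod n \<in> C"
  shows "\<not> no_trapped_vertex (n - 1) C"
proof -
  define x where "x = w mod n"
  have x: "x \<in> {0..n - 1}" unfolding x_def using n_ge_2 by simp
  have "(x - 1) mod n \<in> C" "(x + 1) mod n \<in> C"
    using assms(2,3) unfolding x_def by (simp_all add: mod_diff_left_eq mod_add_left_eq)
  moreover have "(x - 1) mod n = x - 1" if "x \<noteq> 0"
    using x that by (intro mod_pos_pos_trivial) auto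
  moreover have "(x + 1) mod n = x + 1" if "x \<noteq> n - 1"
    using x that by (intro mod_pos_pos_trivial) auto
  ultimately have "x = 0 \<or> x - 1 \<in> C" "x = n - 1 \<or> x + 1 \<in> C" by metis+
  moreover have "x \<notin> C" using assms(1) x_def by simp
  ultimately show ?thesis using x unfolding no_trapped_vertex_def by blast
qed

lemma no_trapped_vertex_iff_gaps:
  "no_trapped_vertex (n - 1) C \<longleftrightarrow>
    u 1 \<noteq> 1 \<and> stop s \<noteq> n - 1 \<and> (\<forall>t\<in>{1..s}. next_start t - stop t \<ge> 2)"
proof
  assume ntv: "no_trapped_vertex (n - 1) C"
  have "u 1 \<noteq> 1"
    using ntv zero_notin_one_in_iff n_ge_2 unfolding no_trapped_vertex_def by force
  moreover have "stop s \<noteq> n - 1"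
  proof
    assume "stop s = n - 1"
    then have "n - 1 \<in> {0..n - 1} - C" "n - 1 - 1 \<in> C"
      using last_notin_pred_in_iff n_ge_2 by auto
    then show False using ntv unfolding no_trapped_vertex_def by blast
  qed
  moreover have "next_start t - stop t \<ge> 2" if t: "t \<in> {1..s}" for t
  proof (rule ccontr)
    assume "\<not> next_start t - stop t \<ge> 2"
    then have next_t: "next_start t = stop t + 1" using stop_lt_next_start[OF t] by simp
    have window: "u 1 \<le> stop t" "stop t < u 1 + n"
      using start_1_le[OF t] length_pos[OF t] stop_lt_wrap[OF t] unfolding stop_def by auto
    have "stop t mod n \<notin> C"
      using not_unrolled_in_gap[OF t, of "stop t"] unrolled_iff_mod_mem[OF window] next_t by simp
    moreover have "(stop t - 1) mod n \<in> C"
      using mod_mem_if_unrolled[OF unrolled_before_stop[OF t]] .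
    moreover have "(stop t + 1) mod n \<in> C"
    proof (cases "t < s")
      case True
      then show ?thesis
        using mod_mem_if_unrolled[OF unrolled_start[of "t + 1"]] next_t unfolding next_start_def by simp
    next
      case False
      then have "stop t + 1 = u 1 + n" using next_t unfolding next_start_def by simp
      then show ?thesis using mod_mem_if_unrolled[OF unrolled_start[of 1]] s_ge_1 by simp
    qed
    ultimately show False using trapped_if_gap_1 ntv by blast
  qed
  ultimately show "u 1 \<noteq> 1 \<and> stop s \<noteq> n - 1 \<and> (\<forall>t\<in>{1..s}. next_start t - stop t \<ge> 2)"
    by blast
next
  assume gaps: "u 1 \<noteq> 1 \<and> stop s \<noteq> n - 1 \<and> (\<forall>t\<in>{1..s}. next_start t - stop t \<ge> 2)"
  have u1: "0 \<le> u 1" "u 1 \<le> n - 1" using start_range[of 1] s_ge_1 by auto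
  show "no_trapped_vertex (n - 1) C"
    unfolding no_trapped_vertex_def
  proof (intro ballI notI)
    fix x assume x: "x \<in> {0..n - 1} - C"
      and trapped: "(x = 0 \<or> x - 1 \<in> C) \<and> (x = n - 1 \<or> x + 1 \<in> C)"
    define w where "w = (if u 1 \<le> x then x else x + n)"
    have w_mod: "w mod n = x" unfolding w_def using x by (auto simp: mod_pos_pos_trivial)
    have window: "u 1 \<le> w" "w < u 1 + n" unfolding w_def using x u1 by auto
    then have "\<not> unrolled w" using unrolled_iff_mod_mem w_mod x by auto
    then obtain t where t: "t \<in> {1..s}" "stop t \<le> w" "w < next_start t"
      using unrolled_cases[OF window] by blast
    show False
    proof (cases "stop t \<le> w - 1")
      case True
      have "u 1 \<le> w - 1" using True start_1_le[OF t(1)] length_pos[OF t(1)] unfolding stop_def by simp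
      moreover have "\<not> unrolled (w - 1)" using not_unrolled_in_gap[OF t(1)] True t(3) by simp
      ultimately have "(w - 1) mod n \<notin> C" using unrolled_iff_mod_mem[of "w - 1"] window by simp
      moreover have "(w - 1) mod n = (x - 1) mod n" using w_mod by (metis mod_diff_left_eq)
      ultimately have "x = 0"
        using trapped x by (cases "x = 0") (auto simp: mod_pos_pos_trivial)
      then have "0 \<notin> C \<and> 1 \<in> C" using trapped x n_ge_2 by auto
      then show False using zero_notin_one_in_iff gaps by simp
    next
      case False
      then have "w + 1 < next_start t" using gaps t by force
      moreover have "w + 1 < u 1 + n" using calculation next_start_le[OF t(1)] by simp
      moreover have "\<not> unrolled (w + 1)" using not_unrolled_in_gap[OF t(1)] t(2) calculation by simp
      ultimately have "(w + 1) mod n \<notin> C" using unrolled_iff_mod_mem[of "w + 1"] window by simp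
      moreover have "(w + 1) mod n = (x + 1) mod n" using w_mod by (metis mod_add_left_eq)
      ultimately have "x = n - 1"
        using trapped x by (cases "x = n - 1") (auto simp: mod_pos_pos_trivial)
      then have "n - 1 \<notin> C \<and> n - 2 \<in> C" using trapped x n_ge_2 by (auto simp: algebra_simps)
      then show False using last_notin_pred_in_iff gaps by simp
    qed
  qed
qed

lemma no_trapped_vertex_iff:
  "no_trapped_vertex (n - 1) C \<longleftrightarrow>
    (u 1 \<noteq> 1 \<and> u s + l s - 1 \<noteq> n - 2) \<and>
    ((\<forall>t\<in>{1..<s}. u (t + 1) - (u t + l t) \<ge> 2) \<and> u 1 - (u s + l s - n) \<ge> 2)"
proof -
  have "{1..s} = insert s {1..<s}" using s_ge_1 by auto
  then show ?thesis unfolding no_trapped_vertex_iff_gaps next_start_def stop_def by auto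
qed

end

lemma min_rep_all:
  assumes "n > 0" "s \<ge> 1" "min_rep n {0..n - 1} s u l"
  shows "s = 1 \<and> n \<le> l 1"
proof -
  have "cyc n 0 n = {0..n - 1}"
    using cyc_subset atLeastAtMost_subset_cyc assms(1) by blast
  then have "is_rep n {0..n - 1} 1 (\<lambda>_. 0) (\<lambda>_. n)"
    unfolding is_rep_def using assms(1) by simp
  then have s: "s = 1" using assms(2,3) unfolding min_rep_def by (metis le_antisym)
  then have "{0..n - 1} = cyc n (u 1) (l 1)"
    using assms(3) unfolding min_rep_def is_rep_def by simp
  then have "nat n = card (cyc n (u 1) (l 1))"
    by (metis card_atLeastAtMost_int diff_add_cancel diff_zero)
  also have "\<dots> \<le> card {u 1..u 1 + l 1 - 1}" unfolding cyc_eq_image by (rule card_image_le) simp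
  finally show ?thesis using s assms(1) by simp
qed

lemma incident_edges_all: "incident_edges b {0..b} = {0..b - 1}"
  unfolding incident_edges_def by auto

theorem proposition3p1:
  fixes k :: nat and n :: int and C :: "int set" and s :: nat and u l :: "nat \<Rightarrow> int"
  assumes "k \<ge> 2" and "n > 2 ^ k"
    and "C \<subseteq> {0..n - 1}"
    and "s \<ge> 1"
    and "min_rep n C s u l"
  shows "maximal_covered k n C \<longleftrightarrow>
     (u 1 \<noteq> 1 \<and> u s + l s - 1 \<noteq> n - 2) \<and>
     ((\<forall>t\<in>{1..<s}. u (t + 1) - (u t + l t) \<ge> 2) \<and> u 1 - (u s + l s - n) \<ge> 2) \<and>
     (let c = 2 ^ k - 2 in
        (if {0, n - 1} \<inter> C = {} then (\<Sum>t=1..s. l t) = c + 1 - int s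
         else (\<Sum>t=1..s. l t) = c + 2 - int s))"
proof -
  have n: "n \<ge> 2" using assms(2) one_le_power[of "2::int" k] by linarith
  have pow: "int (2 ^ k - 1) = 2 ^ k - 1" by (simp add: of_nat_diff)
  have maximal: "maximal_covered k n C \<longleftrightarrow>
      no_trapped_vertex (n - 1) C \<and> int (card (incident_edges (n - 1) C)) = 2 ^ k - 1"
    unfolding pow[symmetric] of_nat_eq_iff
    by (rule maximal_covered_iff_card_incident_edges[OF assms(2,3)])
  show ?thesis
  proof (cases "C = {0..n - 1}")
    case True
    then have "\<not> maximal_covered k n C"
      using maximal incident_edges_all[of "n - 1"] assms(2) by simp
    moreover have "s = 1" "n \<le> l 1" using min_rep_all[of n s u l] n assms(4,5) True by auto
    ultimately show ?thesis by simp
  next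
    case False
    then interpret min_cyclic_rep n C s u l using n assms(3-5) by unfold_locales
    have "int (card (incident_edges (n - 1) C)) = 2 ^ k - 1 \<longleftrightarrow>
        (let c = 2 ^ k - 2 in
          if {0, n - 1} \<inter> C = {} then (\<Sum>t=1..s. l t) = c + 1 - int s
          else (\<Sum>t=1..s. l t) = c + 2 - int s)"
      unfolding card_incident_edges Let_def by auto
    then show ?thesis using maximal no_trapped_vertex_iff by simp
  qed
qed

end
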